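(* Let $p$ be prime, let $k\ge 2$ and $\ell\ge 1$ be integers, and let $\ell_{i_1}\le \ell_{i_2}\le\cdots\le\ell_{i_{k-1}}$ be positive integers. For $1\le m\le k-1$ let $y_{i_m}\in F_p[x]$ be given polynomials of degree less than $\ell_{i_m}$, pairwise distinct, and set $L_{i_m}=(\ell_{i_m}-1)(k-1)+\ell$. Let $s_0,s_1\in F_p[x]$ be two distinct polynomials of degree less than $\ell$, and let $z_{i_m}\in F_p[x]$ be given polynomials of degree less than $L_{i_m}$ ($1\le m\le k-1$). For $h\in\{0,1\}$ consider the system of congruences in the unknowns $(r_{h,0},\dots,r_{h,k-2})$, where each $r_{h,j}$ ranges over the polynomials in $F_p[x]$ of degree less than $L_{i_{k-1}}$: $$z_{i_m}\equiv \sum_{j=0}^{k-2} r_{h,j}\,y_{i_m}^{\,j}+s_h\,y_{i_m}^{\,k-1}\pmod{x^{L_{i_m}}},\qquad m=1,\dots,k-1.$$ Then the system for $h=0$ and the system for $h=1$ have the same number of solutions.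
   Context: $F_p[x]$ is the polynomial ring over the finite field $F_p$. Since $L_{i_1}\le\cdots\le L_{i_{k-1}}$, each congruence is well defined for unknowns taken modulo $x^{L_{i_{k-1}}}$. *)

theory Defs
  imports "HOL-Computational_Algebra.Polynomial" "HOL-Computational_Algebra.Primes"
begin

end

theory Submission
  imports Defs
begin

text \<open>
  Let \<open>n = k - 1\<close> and \<open>P(T) = \<Prod>\<^sub>m (T - y\<^sub>m)\<close>. Since \<open>P\<close> is monic with roots \<open>y\<^sub>m\<close>,
  the polynomial \<open>(s\<^sub>1 - s\<^sub>0) (T\<^sup>n - P(T))\<close> has degree below \<open>n\<close> in \<open>T\<close>, and its
  coefficients \<open>c\<^sub>j\<close> satisfy \<open>\<Sum>\<^sub>j c\<^sub>j y\<^sub>m\<^sup>j = (s\<^sub>1 - s\<^sub>0) y\<^sub>m\<^sup>n\<close> exactly. Hence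
  \<open>r \<mapsto> r + c\<close> maps the solutions for \<open>s\<^sub>1\<close> bijectively onto those for \<open>s\<^sub>0\<close>.
  The \<open>c\<^sub>j\<close> have degree less than \<open>deg(s\<^sub>1 - s\<^sub>0) + n (\<ell>\<^sub>n - 1) < L\<^sub>n\<close>, so the
  degree constraints on the unknowns are preserved. Neither the moduli, nor the
  primality of \<open>p\<close>, nor the distinctness of the \<open>y\<^sub>m\<close> play any role.
\<close>

definition vanishing_poly :: "(nat \<Rightarrow> 'a::comm_ring_1) \<Rightarrow> nat \<Rightarrow> 'a poly" where
  "vanishing_poly y n = (\<Prod>m\<in>{1..n}. [:- y m, 1:])"

lemma vanishing_poly_Suc:
  "vanishing_poly y (Suc n) = vanishing_poly y n * [:- y (Suc n), 1:]"
  unfolding vanishing_poly_def by (simp add: atLeastAtMostSuc_conv mult.commute)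

lemma degree_vanishing_poly: "degree (vanishing_poly y n) = n"
  for y :: "nat \<Rightarrow> 'a::idom"
  unfolding vanishing_poly_def by (simp add: degree_prod_eq_sum_degree)

lemma lead_coeff_vanishing_poly: "lead_coeff (vanishing_poly y n) = 1"
  for y :: "nat \<Rightarrow> 'a::idom"
  unfolding vanishing_poly_def by (simp add: lead_coeff_prod)

lemma poly_vanishing_poly_root: "m \<in> {1..n} \<Longrightarrow> poly (vanishing_poly y n) (y m) = 0"
  unfolding vanishing_poly_def by (auto simp: poly_prod intro!: prod_zero bexI[of _ m])

lemma degree_coeff_vanishing_poly_le:
  fixes y :: "nat \<Rightarrow> 'a::comm_ring_1 poly"
  assumes "\<And>m. m \<in> {1..n} \<Longrightarrow> degree (y m) \<le> B"
  shows "degree (coeff (vanishing_poly y n) j) \<le> n * B"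
  using assms
proof (induction n arbitrary: j)
  case 0
  then show ?case by (simp add: vanishing_poly_def coeff_1)
next
  case (Suc n)
  let ?P = "vanishing_poly y n"
  have IH: "degree (coeff ?P i) \<le> n * B" for i
    using Suc by auto
  have "coeff (vanishing_poly y (Suc n)) j = - y (Suc n) * coeff ?P j + coeff (pCons 0 ?P) j"
    by (simp add: vanishing_poly_Suc mult_pCons_right)
  moreover have "degree (- y (Suc n) * coeff ?P j) \<le> Suc n * B"
    using degree_mult_le[of "- y (Suc n)" "coeff ?P j"] IH[of j] Suc.prems[of "Suc n"] by simp
  moreover have "degree (coeff (pCons 0 ?P) j) \<le> Suc n * B"
    using IH by (cases j) (auto intro: le_trans[OF _ le_add2])
  ultimately show ?case
    by (metis degree_add_le)
qed

lemma monic_poly_root_power: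
  fixes p :: "'a::comm_ring_1 poly"
  assumes "lead_coeff p = 1" and "poly p a = 0"
  shows "a ^ degree p = - (\<Sum>j<degree p. coeff p j * a ^ j)"
proof -
  have "0 = (\<Sum>j\<le>degree p. coeff p j * a ^ j)"
    using assms by (simp add: poly_altdef)
  also have "\<dots> = (\<Sum>j<degree p. coeff p j * a ^ j) + a ^ degree p"
    using assms(1) by (simp add: lessThan_Suc_atMost[symmetric])
  finally show ?thesis
    by (simp add: eq_neg_iff_add_eq_0 add.commute)
qed

lemma degree_add_less_iff:
  fixes p q :: "'a::ab_group_add poly"
  assumes "degree q < N"
  shows "degree (p + q) < N \<longleftrightarrow> degree p < N"
proof
  assume "degree (p + q) < N"
  then show "degree p < N"
    using assms degree_diff_le_max[of "p + q" q] by simp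
next
  assume "degree p < N"
  then show "degree (p + q) < N"
    using assms degree_add_le_max[of p q] by simp
qed

lemma card_eq_by_translation:
  fixes A B :: "('i \<Rightarrow> 'b::ab_group_add) set"
  assumes "\<And>r. r \<in> A \<longleftrightarrow> (\<lambda>i. r i + c i) \<in> B"
  shows "card A = card B"
proof (rule bij_betw_same_card)
  show "bij_betw (\<lambda>r i. r i + c i) A B"
    by (rule bij_betw_byWitness[where f' = "\<lambda>r i. r i - c i"])
      (use assms[of "\<lambda>i. _ i - c i"] in \<open>auto simp: assms\<close>)
qed

theorem theorem4:
  fixes y z :: "nat \<Rightarrow> 'a :: {field, finite} poly"
    and s :: "nat \<Rightarrow> 'a poly"
    and lens :: "nat \<Rightarrow> nat" and l k :: nat and L :: "nat \<Rightarrow> nat"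
  assumes p_prime: "prime (card (UNIV :: 'a set))"
    and k: "k \<ge> 2" and l: "l \<ge> 1"
    and lens_pos: "\<And>m. m \<in> {1..k-1} \<Longrightarrow> lens m \<ge> 1"
    and lens_sorted: "\<And>m m'. 1 \<le> m \<Longrightarrow> m \<le> m' \<Longrightarrow> m' \<le> k-1 \<Longrightarrow> lens m \<le> lens m'"
    and y_deg: "\<And>m. m \<in> {1..k-1} \<Longrightarrow> degree (y m) < lens m"
    and y_dist: "inj_on y {1..k-1}"
    and L_def: "\<And>m. L m = (lens m - 1) * (k - 1) + l"
    and s_dist: "s 0 \<noteq> s 1"
    and s_deg: "degree (s 0) < l" "degree (s 1) < l"
    and z_deg: "\<And>m. m \<in> {1..k-1} \<Longrightarrow> degree (z m) < L m"
  shows "card {r :: nat \<Rightarrow> 'a poly.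
            (\<forall>j. k - 1 \<le> j \<longrightarrow> r j = 0) \<and>
            (\<forall>j < k - 1. degree (r j) < L (k - 1)) \<and>
            (\<forall>m \<in> {1..k-1}. monom 1 (L m) dvd
               (z m - ((\<Sum>j<k-1. r j * y m ^ j) + s 0 * y m ^ (k - 1))))}
       = card {r :: nat \<Rightarrow> 'a poly.
            (\<forall>j. k - 1 \<le> j \<longrightarrow> r j = 0) \<and>
            (\<forall>j < k - 1. degree (r j) < L (k - 1)) \<and>
            (\<forall>m \<in> {1..k-1}. monom 1 (L m) dvd
               (z m - ((\<Sum>j<k-1. r j * y m ^ j) + s 1 * y m ^ (k - 1))))}"
proof -
  define n where "n = k - 1"
  define P where "P = vanishing_poly y n"
  define d where "d = s 1 - s 0"
  define c where "c = (\<lambda>j. if j < n then - d * coeff P j else 0)"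
  have y_deg_le: "degree (y m) \<le> lens n - 1" if "m \<in> {1..n}" for m
    using lens_sorted[of m n] y_deg[of m] that by (auto simp: n_def)
  have c_deg: "degree (c j) < L n" for j
  proof -
    have "degree (- d * coeff P j) \<le> degree d + n * (lens n - 1)"
      using degree_mult_le[of "- d" "coeff P j"]
        degree_coeff_vanishing_poly_le[of n y "lens n - 1" j, OF y_deg_le]
      by (simp add: P_def)
    moreover have "degree d < l"
      using s_deg degree_diff_le_max[of "s 1" "s 0"] by (simp add: d_def)
    ultimately show ?thesis
      using l by (simp add: c_def L_def n_def mult.commute)
  qed
  have c_sum: "(\<Sum>j<n. c j * y m ^ j) = d * y m ^ n" if "m \<in> {1..n}" for m
  proof -
    have "y m ^ n = - (\<Sum>j<n. coeff P j * y m ^ j)"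
      using monic_poly_root_power[OF lead_coeff_vanishing_poly poly_vanishing_poly_root[OF that]]
      by (simp add: P_def degree_vanishing_poly)
    then show ?thesis
      by (simp add: c_def sum_distrib_left sum_negf mult.assoc)
  qed
  have c_high: "c j = 0" if "n \<le> j" for j
    using that by (simp add: c_def)
  have shift_eq: "(\<Sum>j<n. (r j + c j) * y m ^ j) + s 0 * y m ^ n
      = (\<Sum>j<n. r j * y m ^ j) + s 1 * y m ^ n" if "m \<in> {1..n}" for m r
    using c_sum[OF that] by (simp add: distrib_right sum.distrib d_def algebra_simps)
  show ?thesis
    unfolding n_def[symmetric]
    by (rule card_eq_by_translation[where c = c, symmetric])
      (simp add: c_high degree_add_less_iff[OF c_deg] shift_eq)
qed

end
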